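(* Let $K$ be a field, $s\ge2$, $S=K[t_1,\ldots,t_s]$ with each $t_i$ of degree $1$, and let $\mathcal{L}\subset\mathbb{Z}^s$ be a homogeneous lattice with $\mathbb{Z}$-basis $\alpha_1,\ldots,\alpha_{s-1}$. Then $$\deg S/I(\mathcal{L})=(s-1)!\,{\rm vol}({\rm conv}(0,\alpha_1,\ldots,\alpha_{s-1})),$$ where ${\rm vol}$ is the relative volume and ${\rm conv}$ the convex hull.
   Context: A lattice is a subgroup of $\mathbb{Z}^s$; it is homogeneous if $\sum_ia_i=0$ for all $a\in\mathcal{L}$. For $a\in\mathbb{Z}^s$ write $a=a^+-a^-$ with $a^+,a^-\in\mathbb{N}^s$ of disjoint supports; $I(\mathcal{L})=(\{t^{a^+}-t^{a^-}:a\in\mathcal{L}\})$. The relative volume of an $n$-dimensional lattice polytope $\mathcal{P}\subset\mathbb{R}^s$ is its $n$-dimensional volume measured in its affine hull, normalized with respect to the lattice of integer points of the affine hull (equivalently $\lim_{k\to\infty}|k\mathcal{P}\cap\mathbb{Z}^s|/k^n$). For a graded ideal $I$, with Hilbert function $H_I(d)=\dim_K S_d/I_d$ and Hilbert polynomial $h_I(t)=c_kt^k+\cdots$ (agreeing with $H_I(d)$ for $d\gg0$; $k=-1$ meaning $h_I=0$), $\deg S/I=c_k\,k!$ if $k\ge0$ and $\dim_K S/I$ if $k=-1$. *)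

theory Defs
  imports "HOL-Analysis.Analysis" "HOL-Library.Poly_Mapping" "HOL-Computational_Algebra.Polynomial"
begin

text \<open>The polynomial ring S = K[t_i : i in 'n], with 'n a finite type of cardinality s.
  Polynomials are finitely supported maps from exponent vectors to coefficients.\<close>
type_synonym ('n, 'k) mpoly = "('n \<Rightarrow>\<^sub>0 nat) \<Rightarrow>\<^sub>0 'k"

definition kscale :: "'k::field \<Rightarrow> ('n, 'k) mpoly \<Rightarrow> ('n, 'k) mpoly" where
  "kscale c p = Poly_Mapping.single 0 c * p"

definition kdim :: "('n, 'k::field) mpoly set \<Rightarrow> nat" where
  "kdim V = vector_space.dim (kscale :: 'k \<Rightarrow> _) V"

definition mdeg :: "('n::finite \<Rightarrow>\<^sub>0 nat) \<Rightarrow> nat" where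
  "mdeg m = (\<Sum>i\<in>UNIV. Poly_Mapping.lookup m i)"

definition Sdeg :: "nat \<Rightarrow> ('n::finite, 'k::field) mpoly set" where
  "Sdeg d = {p. \<forall>m\<in>Poly_Mapping.keys p. mdeg m = d}"

definition ideal_gen :: "('n, 'k::comm_ring_1) mpoly set \<Rightarrow> ('n, 'k) mpoly set" where
  "ideal_gen G = {p. \<exists>F q. finite F \<and> F \<subseteq> G \<and> p = (\<Sum>g\<in>F. q g * g)}"

text \<open>Hilbert function H_I(d) = dim_K S_d / I_d = dim_K S_d - dim_K I_d.\<close>
definition hilbert_fun :: "('n::finite, 'k::field) mpoly set \<Rightarrow> nat \<Rightarrow> nat" where
  "hilbert_fun I d = kdim (Sdeg d :: ('n, 'k) mpoly set) - kdim (I \<inter> Sdeg d)"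

definition is_hilbert_poly :: "('n::finite, 'k::field) mpoly set \<Rightarrow> real poly \<Rightarrow> bool" where
  "is_hilbert_poly I p \<longleftrightarrow> (\<forall>\<^sub>F d in sequentially. real (hilbert_fun I d) = poly p (real d))"

text \<open>Degree (multiplicity) of S/I: c_k k! if the Hilbert polynomial has degree k >= 0,
  and dim_K S/I = sum of all H_I(d) if the Hilbert polynomial is zero.\<close>
definition degree_quot :: "('n::finite, 'k::field) mpoly set \<Rightarrow> real" where
  "degree_quot I = (let p = (THE p. is_hilbert_poly I p) in
     if p = 0 then real (\<Sum>d\<in>{d. hilbert_fun I d \<noteq> 0}. hilbert_fun I d)
     else lead_coeff p * fact (degree p))"

definition pos_part :: "int^'n::finite \<Rightarrow> ('n \<Rightarrow>\<^sub>0 nat)" where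
  "pos_part a = Abs_poly_mapping (\<lambda>i. nat (a $ i))"

definition neg_part :: "int^'n::finite \<Rightarrow> ('n \<Rightarrow>\<^sub>0 nat)" where
  "neg_part a = Abs_poly_mapping (\<lambda>i. nat (- (a $ i)))"

definition tmon :: "('n \<Rightarrow>\<^sub>0 nat) \<Rightarrow> ('n, 'k::comm_ring_1) mpoly" where
  "tmon e = Poly_Mapping.single e 1"

definition lattice_ideal :: "(int^'n::finite) set \<Rightarrow> ('n, 'k::comm_ring_1) mpoly set" where
  "lattice_ideal L = ideal_gen {tmon (pos_part a) - tmon (neg_part a) | a. a \<in> L}"

definition homogeneous_lattice :: "(int^'n::finite) set \<Rightarrow> bool" where
  "homogeneous_lattice L \<longleftrightarrow> (\<forall>a\<in>L. (\<Sum>i\<in>UNIV. a $ i) = 0)"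

definition is_Z_basis :: "(int^'n::finite) set \<Rightarrow> nat \<Rightarrow> (nat \<Rightarrow> int^'n) \<Rightarrow> bool" where
  "is_Z_basis L r \<alpha> \<longleftrightarrow>
     L = {(\<Sum>i<r. c i *s \<alpha> i) | c. True} \<and>
     (\<forall>c. (\<Sum>i<r. c i *s \<alpha> i) = 0 \<longrightarrow> (\<forall>i<r. c i = 0))"

definition real_vec :: "int^'n \<Rightarrow> real^'n" where
  "real_vec a = (\<chi> i. real_of_int (a $ i))"

definition rel_volume :: "(real^'n::finite) set \<Rightarrow> real" where
  "rel_volume P = lim (\<lambda>k::nat. real (card ((\<lambda>x. real k *\<^sub>R x) ` P \<inter> {x. \<forall>i. x $ i \<in> \<int>}))
                                 / real k ^ nat (aff_dim P))"

end

theory Submission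
  imports Defs
begin

text \<open>
  Let \<open>m = s - 1\<close> and let \<open>F\<close> be the set of integer points of the half-open parallelepiped
  \<open>{\<Sum>i. c\<^sub>i \<alpha>\<^sub>i | 0 \<le> c\<^sub>i < 1}\<close>; it is a system of representatives of the integer points of the
  hyperplane \<open>\<Sum>x\<^sub>j = 0\<close> modulo \<open>L\<close>.

  Algebra: \<open>I(L)\<close> is spanned by the binomials \<open>t\<^sup>u - t\<^sup>v\<close> with \<open>u - v \<in> L\<close>, and the functionals
  summing the coefficients over a class modulo \<open>L\<close> vanish on it, so \<open>H(d)\<close> is the number of classes
  of degree-\<open>d\<close> monomials modulo \<open>L\<close>. Subtracting \<open>d e\<^sub>0\<close> maps these classes injectively into
  \<open>F\<close>, and for large \<open>d\<close> every \<open>r \<in> F\<close> is hit, since \<open>r + d e\<^sub>0\<close> is congruent to a nonnegative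
  vector. So the Hilbert polynomial is the constant \<open>|F|\<close> and \<open>deg S/I(L) = |F|\<close>.

  Geometry: every integer point of \<open>kP\<close> is uniquely \<open>r + \<Sum>i. n\<^sub>i \<alpha>\<^sub>i\<close> with \<open>r \<in> F\<close>, \<open>n\<^sub>i \<in> \<nat>\<close>
  and \<open>\<Sum>n\<^sub>i \<le> k\<close>, and all such points with \<open>\<Sum>n\<^sub>i \<le> k - m\<close> lie in \<open>kP\<close>. Hence
  \<open>|F| (k choose m) \<le> |kP \<inter> \<int>\<^sup>s| \<le> |F| (k + m choose m)\<close>, and the relative volume of \<open>P\<close> is \<open>|F|/m!\<close>.
\<close>

section \<open>Integer linear dependence\<close>

lemma int_dependence_from_eliminated_rows:
  fixes v :: "'i \<Rightarrow> 'j \<Rightarrow> int"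
  assumes S: "finite S" "k \<in> S" and "v k j \<noteq> 0"
    and d: "\<forall>j'\<in>J. (\<Sum>i\<in>S - {k}. d i * (v k j * v i j' - v i j * v k j')) = 0"
      "\<exists>i\<in>S - {k}. d i \<noteq> 0"
  shows "\<exists>e. (\<forall>j'\<in>insert j J. (\<Sum>i\<in>S. e i * v i j') = 0) \<and> (\<exists>i\<in>S. e i \<noteq> 0)"
proof -
  define e where "e i = (if i = k then - (\<Sum>i\<in>S - {k}. d i * v i j) else v k j * d i)" for i
  have e_sum: "(\<Sum>i\<in>S. e i * v i j') = (\<Sum>i\<in>S - {k}. d i * (v k j * v i j' - v i j * v k j'))" for j'
  proof -
    have "(\<Sum>i\<in>S. e i * v i j') = e k * v k j' + (\<Sum>i\<in>S - {k}. e i * v i j')"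
      using S by (simp add: sum.remove)
    also have "(\<Sum>i\<in>S - {k}. e i * v i j') = (\<Sum>i\<in>S - {k}. v k j * d i * v i j')"
      by (rule sum.cong) (auto simp: e_def)
    finally show ?thesis
      by (simp add: e_def sum_distrib_left sum_distrib_right sum_subtractf algebra_simps)
  qed
  have "(\<Sum>i\<in>S - {k}. d i * (v k j * v i j - v i j * v k j)) = 0" by simp
  then have "\<forall>j'\<in>insert j J. (\<Sum>i\<in>S. e i * v i j') = 0"
    using e_sum d(1) by auto
  moreover have "\<exists>i\<in>S. e i \<noteq> 0" using d(2) \<open>v k j \<noteq> 0\<close> by (auto simp: e_def)
  ultimately show ?thesis by blast
qed

lemma int_dependent_if_real_dependent:
  fixes v :: "'i \<Rightarrow> 'j \<Rightarrow> int" and c :: "'i \<Rightarrow> real"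
  assumes "finite J" "finite S"
    and "\<forall>j\<in>J. (\<Sum>i\<in>S. c i * real_of_int (v i j)) = 0" and "\<exists>i\<in>S. c i \<noteq> 0"
  shows "\<exists>d. (\<forall>j\<in>J. (\<Sum>i\<in>S. d i * v i j) = 0) \<and> (\<exists>i\<in>S. d i \<noteq> 0)"
  using assms
proof (induction J arbitrary: S c v rule: finite_induct)
  case empty
  then show ?case by (rule_tac x="\<lambda>_. 1" in exI) auto
next
  case (insert j J)
  show ?case
  proof (cases "\<forall>i\<in>S. v i j = 0")
    case True
    with insert obtain d where "\<forall>j\<in>J. (\<Sum>i\<in>S. d i * v i j) = 0" "\<exists>i\<in>S. d i \<noteq> 0"
      by blast
    with True show ?thesis by (rule_tac x=d in exI) auto
  next
    case False
    then obtain k where k: "k \<in> S" "v k j \<noteq> 0" by auto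
    \<comment> \<open>Integer Gaussian elimination: the rows \<open>w i\<close> have a zero in column \<open>j\<close> and row \<open>k\<close> vanishes.\<close>
    define w where "w i j' = v k j * v i j' - v i j * v k j'" for i j'
    have "\<forall>j'\<in>J. (\<Sum>i\<in>S - {k}. c i * real_of_int (w i j')) = 0"
    proof
      fix j' assume "j' \<in> J"
      have "(\<Sum>i\<in>S - {k}. c i * real_of_int (w i j')) = (\<Sum>i\<in>S. c i * real_of_int (w i j'))"
        using k insert.prems(1) by (simp add: sum.remove w_def)
      also have "\<dots> = real_of_int (v k j) * (\<Sum>i\<in>S. c i * real_of_int (v i j'))
          - (\<Sum>i\<in>S. c i * real_of_int (v i j)) * real_of_int (v k j')"
        by (simp add: w_def sum_distrib_left sum_distrib_right sum_subtractf algebra_simps)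
      also have "\<dots> = 0" using insert.prems(2) \<open>j' \<in> J\<close> by simp
      finally show "(\<Sum>i\<in>S - {k}. c i * real_of_int (w i j')) = 0" .
    qed
    moreover have "\<exists>i\<in>S - {k}. c i \<noteq> 0"
    proof (rule ccontr)
      assume "\<not> (\<exists>i\<in>S - {k}. c i \<noteq> 0)"
      then have "(\<Sum>i\<in>S. c i * real_of_int (v i j)) = c k * real_of_int (v k j)"
        using k insert.prems(1) by (simp add: sum.remove)
      then show False using insert.prems(2,3) k \<open>\<not> (\<exists>i\<in>S - {k}. c i \<noteq> 0)\<close> by auto
    qed
    ultimately obtain d where "\<forall>j'\<in>J. (\<Sum>i\<in>S - {k}. d i * w i j') = 0" "\<exists>i\<in>S - {k}. d i \<noteq> 0"
      using insert.IH[of "S - {k}" c w] insert.prems(1) by auto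
    then show ?thesis
      by (intro int_dependence_from_eliminated_rows[where v=v and k=k and d=d] insert.prems(1) k)
        (simp_all add: w_def)
  qed
qed

section \<open>Counting lattice points by binomial coefficients\<close>

lemma pow_diff_le_fact_mult_binomial:
  assumes "k \<le> n"
  shows "real (n - k) ^ k \<le> fact k * real (n choose k)"
proof -
  have "real (n - k) ^ k / fact k = (\<Prod>i = 0..<k. real (n - k) / real (k - i))"
    by (simp add: prod_dividef fact_prod_rev[of k] of_nat_prod)
  also have "\<dots> \<le> (\<Prod>i = 0..<k. real (n - i) / real (k - i))"
    by (rule prod_mono) (use assms in \<open>auto intro!: divide_right_mono\<close>)
  also have "\<dots> = real (n choose k)"
    using binomial_altdef_of_nat[OF assms, where 'a=real] by simp
  finally show ?thesis by (simp add: divide_le_eq mult.commute)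
qed

lemma fact_mult_binomial_le_pow: "fact k * real (n choose k) \<le> real n ^ k"
proof -
  have "real ((n choose k) * fact k) \<le> real (n ^ k)"
    by (simp only: of_nat_le_iff binomial_fact_pow)
  then show ?thesis by (simp add: mult.commute)
qed

lemma tendsto_binomial_div_power: "(\<lambda>k. real ((k + c) choose m) / real k ^ m) \<longlonglongrightarrow> 1 / fact m"
proof (rule tendsto_sandwich)
  have div_k: "(\<lambda>k. real a / real k) \<longlonglongrightarrow> 0" for a
    using tendsto_mult_right_zero[OF lim_inverse_n, of "real a"] by (simp add: divide_inverse)
  have "(\<lambda>k. (1 - real m / real k) ^ m / fact m) \<longlonglongrightarrow> (1 - 0) ^ m / fact m"
    by (intro tendsto_intros div_k) simp
  then show "(\<lambda>k. (1 - real m / real k) ^ m / fact m) \<longlonglongrightarrow> 1 / fact m" by simp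
  have "(\<lambda>k. (1 + real c / real k) ^ m / fact m) \<longlonglongrightarrow> (1 + 0) ^ m / fact m"
    by (intro tendsto_intros div_k) simp
  then show "(\<lambda>k. (1 + real c / real k) ^ m / fact m) \<longlonglongrightarrow> 1 / fact m" by simp
  show "\<forall>\<^sub>F k in sequentially. (1 - real m / real k) ^ m / fact m \<le> real ((k + c) choose m) / real k ^ m"
    using eventually_ge_at_top[of "max m 1"]
  proof eventually_elim
    case (elim k)
    then have k: "k \<ge> m" "k > 0" by auto
    have "real (k - m) ^ m \<le> real (k + c - m) ^ m" by (intro power_mono) auto
    also have "\<dots> \<le> fact m * real ((k + c) choose m)"
      by (rule pow_diff_le_fact_mult_binomial) (use k in simp)
    finally have "real (k - m) ^ m / fact m \<le> real ((k + c) choose m)"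
      by (simp add: divide_le_eq mult.commute)
    then have "real (k - m) ^ m / fact m / real k ^ m \<le> real ((k + c) choose m) / real k ^ m"
      by (rule divide_right_mono) simp
    moreover have "1 - real m / real k = real (k - m) / real k"
      using k by (simp add: of_nat_diff diff_divide_distrib)
    then have "(1 - real m / real k) ^ m / fact m = real (k - m) ^ m / fact m / real k ^ m"
      by (simp add: power_divide)
    ultimately show ?case by simp
  qed
  show "\<forall>\<^sub>F k in sequentially. real ((k + c) choose m) / real k ^ m \<le> (1 + real c / real k) ^ m / fact m"
    using eventually_ge_at_top[of "1::nat"]
  proof eventually_elim
    case (elim k)
    have "real ((k + c) choose m) \<le> real (k + c) ^ m / fact m"
      using fact_mult_binomial_le_pow[of m "k + c"] by (simp add: le_divide_eq mult.commute)
    then have "real ((k + c) choose m) / real k ^ m \<le> real (k + c) ^ m / fact m / real k ^ m"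
      by (rule divide_right_mono) simp
    moreover have "1 + real c / real k = real (k + c) / real k"
      using elim by (simp add: add_divide_distrib)
    then have "(1 + real c / real k) ^ m / fact m = real (k + c) ^ m / fact m / real k ^ m"
      by (simp add: power_divide)
    ultimately show ?case by simp
  qed
qed

lemma tendsto_binomial_sandwich:
  fixes f :: "nat \<Rightarrow> nat"
  assumes lower: "\<And>k. k \<ge> m \<Longrightarrow> N * (k choose m) \<le> f k"
    and upper: "\<And>k. f k \<le> N * ((k + m) choose m)"
  shows "(\<lambda>k. real (f k) / real k ^ m) \<longlonglongrightarrow> real N / fact m"
proof (rule tendsto_sandwich)
  show "(\<lambda>k. real N * (real ((k + 0) choose m) / real k ^ m)) \<longlonglongrightarrow> real N / fact m"
    using tendsto_mult_left[OF tendsto_binomial_div_power[of 0 m], of "real N"] by simp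
  show "(\<lambda>k. real N * (real ((k + m) choose m) / real k ^ m)) \<longlonglongrightarrow> real N / fact m"
    using tendsto_mult_left[OF tendsto_binomial_div_power[of m m], of "real N"] by simp
  show "\<forall>\<^sub>F k in sequentially. real N * (real ((k + 0) choose m) / real k ^ m) \<le> real (f k) / real k ^ m"
    using eventually_ge_at_top[of m]
    by eventually_elim (use lower in \<open>simp add: divide_right_mono flip: of_nat_mult\<close>)
  show "\<forall>\<^sub>F k in sequentially. real (f k) / real k ^ m \<le> real N * (real ((k + m) choose m) / real k ^ m)"
    by (intro always_eventually allI) (use upper in \<open>simp add: divide_right_mono flip: of_nat_mult\<close>)
qed

definition bounded_compositions :: "nat \<Rightarrow> nat \<Rightarrow> (nat \<Rightarrow> nat) set" where
  "bounded_compositions m K = {n. (\<forall>i\<ge>m. n i = 0) \<and> (\<Sum>i<m. n i) \<le> K}"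

lemma bij_betw_bounded_compositions_lists:
  "bij_betw (\<lambda>n. map n [0..<m] @ [K - (\<Sum>i<m. n i)]) (bounded_compositions m K)
     {l. size l = Suc m \<and> sum_list l = K}"
proof -
  define A where "A = bounded_compositions m K"
  define LS where "LS = {l::nat list. size l = Suc m \<and> sum_list l = K}"
  define g where "g n = map n [0..<m] @ [K - (\<Sum>i<m. n i)]" for n :: "nat \<Rightarrow> nat"
  have "inj_on g A"
  proof (rule inj_onI)
    fix n n' assume "n \<in> A" "n' \<in> A" "g n = g n'"
    then have "\<forall>i<m. n i = n' i" by (simp add: g_def map_eq_conv)
    with \<open>n \<in> A\<close> \<open>n' \<in> A\<close> show "n = n'"
      by (auto simp: A_def bounded_compositions_def intro!: ext) (metis not_le)
  qed
  moreover have "g ` A = LS"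
  proof
    show "g ` A \<subseteq> LS"
    proof
      fix l assume "l \<in> g ` A"
      then obtain n where n: "n \<in> A" "l = g n" by auto
      have "sum_list (map n [0..<m]) = (\<Sum>i<m. n i)"
        by (simp add: sum_list_sum_nth atLeast0LessThan)
      then show "l \<in> LS" using n by (auto simp: LS_def g_def A_def bounded_compositions_def)
    qed
    show "LS \<subseteq> g ` A"
    proof
      fix l assume l: "l \<in> LS"
      define n where "n i = (if i < m then l ! i else 0)" for i
      have s: "(\<Sum>i<m. n i) = (\<Sum>i<m. l ! i)" by (simp add: n_def)
      have "length l = Suc m" "sum_list l = K" using l by (auto simp: LS_def)
      then have sum_l: "(\<Sum>i<m. l ! i) + l ! m = K"
        by (simp add: sum_list_sum_nth atLeast0LessThan)
      then have "n \<in> A" using s by (auto simp: A_def bounded_compositions_def n_def)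
      moreover have "g n = l"
      proof -
        have "map n [0..<m] = take m l"
          using l by (auto simp: LS_def n_def intro!: nth_equalityI)
        moreover have "l = take m l @ [l ! m]"
          using l by (simp add: LS_def take_Suc_conv_app_nth[symmetric])
        moreover have "K - (\<Sum>i<m. n i) = l ! m" using s sum_l by simp
        ultimately show ?thesis by (simp add: g_def)
      qed
      ultimately show "l \<in> g ` A" by blast
    qed
  qed
  ultimately show ?thesis unfolding bij_betw_def A_def LS_def g_def by blast
qed

lemma card_bounded_compositions: "card (bounded_compositions m K) = (K + m) choose m"
proof -
  have "card (bounded_compositions m K) = card {l. size l = Suc m \<and> sum_list l = K}"
    by (rule bij_betw_same_card[OF bij_betw_bounded_compositions_lists])
  also have "\<dots> = (K + Suc m - 1) choose K" by (rule card_length_sum_list)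
  also have "\<dots> = (K + m) choose m" by (simp add: binomial_symmetric[of m "K+m"] add.commute)
  finally show ?thesis .
qed

lemma finite_bounded_compositions: "finite (bounded_compositions m K)"
  by (rule card_ge_0_finite) (simp add: card_bounded_compositions)

lemma finite_bounded_int_vecs: "finite {x::int^'n::finite. \<forall>j. \<bar>x$j\<bar> \<le> b}"
proof -
  have "finite {f::'n \<Rightarrow> int. \<forall>j. (j \<in> UNIV \<longrightarrow> f j \<in> {-b..b}) \<and> (j \<notin> UNIV \<longrightarrow> f j = 0)}"
    by (rule finite_set_of_finite_funs) auto
  moreover have "{x::int^'n. \<forall>j. \<bar>x$j\<bar> \<le> b}
      \<subseteq> vec_lambda ` {f. \<forall>j. (j \<in> UNIV \<longrightarrow> f j \<in> {-b..b}) \<and> (j \<notin> UNIV \<longrightarrow> f j = 0)}"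
    by (auto intro!: image_eqI[where x="vec_nth x" for x] simp: abs_le_iff minus_le_iff)
  ultimately show ?thesis by (meson finite_imageI finite_subset)
qed

section \<open>Graded components of the polynomial ring\<close>

lemma lookup_kscale: "Poly_Mapping.lookup (kscale c p) w = c * Poly_Mapping.lookup p w"
  unfolding kscale_def by (simp flip: mult_map_scale_conv_mult add: map.rep_eq when_def)

interpretation kspace: vector_space "kscale :: 'k::field \<Rightarrow> ('n, 'k) mpoly \<Rightarrow> _"
  by unfold_locales
    (simp_all add: poly_mapping_eq_iff fun_eq_iff lookup_kscale lookup_add algebra_simps)

lemma lookup_tmon: "Poly_Mapping.lookup (tmon u) w = (if w = u then 1 else 0)"
  by (simp add: tmon_def lookup_single)

lemma tmon_eq_iff: "tmon u = (tmon v :: ('n, 'k::comm_ring_1) mpoly) \<longleftrightarrow> u = v"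
  unfolding tmon_def by (metis lookup_single_eq lookup_single_not_eq one_neq_zero)

lemma tmon_add: "tmon (u + v) = tmon u * tmon v"
  by (simp add: tmon_def mult_single)

lemma poly_mapping_sum_singles:
  "p = (\<Sum>u\<in>Poly_Mapping.keys p. Poly_Mapping.single u (Poly_Mapping.lookup p u))"
  by (rule poly_mapping_eqI) (simp add: lookup_sum lookup_single when_def sum.delta in_keys_iff)

lemma mult_tmon:
  "q * tmon e = (\<Sum>u\<in>Poly_Mapping.keys q. Poly_Mapping.single (u + e) (Poly_Mapping.lookup q u))"
proof -
  have "q * tmon e = (\<Sum>u\<in>Poly_Mapping.keys q. Poly_Mapping.single u (Poly_Mapping.lookup q u) * tmon e)"
    by (subst poly_mapping_sum_singles[of q]) (rule sum_distrib_right)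
  then show ?thesis by (simp add: tmon_def mult_single)
qed

lemma kspace_independent_if_private_monomials:
  fixes Bs :: "('n, 'k::field) mpoly set"
  assumes "finite Bs"
    and "\<And>b. b \<in> Bs \<Longrightarrow>
      \<exists>w. Poly_Mapping.lookup b w = 1 \<and> (\<forall>b'\<in>Bs. b' \<noteq> b \<longrightarrow> Poly_Mapping.lookup b' w = 0)"
  shows "kspace.independent Bs"
  unfolding kspace.dependent_finite[OF assms(1)]
proof clarify
  fix c v assume v: "v \<in> Bs" and cv: "c v \<noteq> 0" and s: "(\<Sum>v\<in>Bs. kscale (c v) v) = 0"
  obtain w where w: "Poly_Mapping.lookup v w = 1"
      "\<forall>b'\<in>Bs. b' \<noteq> v \<longrightarrow> Poly_Mapping.lookup b' w = 0"
    using assms(2)[OF v] by blast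
  have "0 = Poly_Mapping.lookup (\<Sum>v\<in>Bs. kscale (c v) v) w" using s by simp
  also have "\<dots> = (\<Sum>b\<in>Bs. c b * Poly_Mapping.lookup b w)" by (simp add: lookup_sum lookup_kscale)
  also have "\<dots> = c v * Poly_Mapping.lookup v w + (\<Sum>b\<in>Bs - {v}. c b * Poly_Mapping.lookup b w)"
    using assms(1) v by (simp add: sum.remove)
  also have "(\<Sum>b\<in>Bs - {v}. c b * Poly_Mapping.lookup b w) = 0"
    using w(2) by (intro sum.neutral) auto
  finally show False using w(1) cv by simp
qed

lemma in_kspace_span_tmon:
  fixes p :: "('n, 'k::field) mpoly"
  assumes "finite M" "Poly_Mapping.keys p \<subseteq> M"
  shows "p \<in> kspace.span (tmon ` M)"
proof -
  have "p = (\<Sum>u\<in>M. kscale (Poly_Mapping.lookup p u) (tmon u))"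
  proof (rule poly_mapping_eqI)
    fix w
    have "Poly_Mapping.lookup (\<Sum>u\<in>M. kscale (Poly_Mapping.lookup p u) (tmon u)) w
        = (\<Sum>u\<in>M. if w = u then Poly_Mapping.lookup p u else 0)"
      by (simp add: lookup_sum lookup_kscale lookup_tmon if_distrib cong: if_cong)
    also have "\<dots> = Poly_Mapping.lookup p w"
      using assms by (auto simp: sum.delta in_keys_iff)
    finally show "Poly_Mapping.lookup p w
        = Poly_Mapping.lookup (\<Sum>u\<in>M. kscale (Poly_Mapping.lookup p u) (tmon u)) w" by simp
  qed
  also have "\<dots> \<in> kspace.span (tmon ` M)"
    by (intro kspace.span_sum kspace.span_scale kspace.span_base) auto
  finally show ?thesis .
qed

definition deg_monomials :: "nat \<Rightarrow> ('n::finite \<Rightarrow>\<^sub>0 nat) set" where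
  "deg_monomials d = {u. mdeg u = d}"

lemma finite_deg_monomials: "finite (deg_monomials d :: ('n::finite \<Rightarrow>\<^sub>0 nat) set)"
proof -
  have "Poly_Mapping.lookup ` (deg_monomials d :: ('n \<Rightarrow>\<^sub>0 nat) set)
      \<subseteq> {f. \<forall>i. (i \<in> UNIV \<longrightarrow> f i \<in> {..d}) \<and> (i \<notin> UNIV \<longrightarrow> f i = 0)}"
  proof (rule subsetI, rule CollectI, intro allI)
    fix f :: "'n \<Rightarrow> nat" and i assume "f \<in> Poly_Mapping.lookup ` deg_monomials d"
    then obtain u where u: "u \<in> deg_monomials d" "f = Poly_Mapping.lookup u"
      by auto
    have "Poly_Mapping.lookup u i \<le> (\<Sum>i\<in>UNIV. Poly_Mapping.lookup u i)" by (rule member_le_sum) auto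
    then show "(i \<in> UNIV \<longrightarrow> f i \<in> {..d}) \<and> (i \<notin> UNIV \<longrightarrow> f i = 0)"
      using u by (simp add: deg_monomials_def mdeg_def)
  qed
  moreover have "finite {f::'n \<Rightarrow> nat. \<forall>i. (i \<in> UNIV \<longrightarrow> f i \<in> {..d}) \<and> (i \<notin> UNIV \<longrightarrow> f i = 0)}"
    by (rule finite_set_of_finite_funs) auto
  ultimately have "finite (Poly_Mapping.lookup ` (deg_monomials d :: ('n \<Rightarrow>\<^sub>0 nat) set))" by (rule finite_subset)
  then show ?thesis by (rule finite_imageD) (simp add: inj_on_def poly_mapping_eqI)
qed

lemma Sdeg_iff_keys: "p \<in> Sdeg d \<longleftrightarrow> Poly_Mapping.keys p \<subseteq> deg_monomials d"
  by (auto simp: Sdeg_def deg_monomials_def)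

lemma kdim_Sdeg: "kdim (Sdeg d :: ('n::finite, 'k::field) mpoly set) = card (deg_monomials d :: ('n \<Rightarrow>\<^sub>0 nat) set)"
  unfolding kdim_def
proof (rule kspace.dim_unique[of "tmon ` deg_monomials d"])
  show "tmon ` deg_monomials d \<subseteq> (Sdeg d :: ('n, 'k) mpoly set)"
    by (auto simp: Sdeg_iff_keys tmon_def)
  show "(Sdeg d :: ('n, 'k) mpoly set) \<subseteq> kspace.span (tmon ` deg_monomials d)"
    using in_kspace_span_tmon[OF finite_deg_monomials] by (auto simp: Sdeg_iff_keys)
  show "kspace.independent (tmon ` deg_monomials d :: ('n, 'k) mpoly set)"
    by (rule kspace_independent_if_private_monomials) (auto simp: finite_deg_monomials lookup_tmon)
  show "card (tmon ` deg_monomials d :: ('n, 'k) mpoly set) = card (deg_monomials d :: ('n \<Rightarrow>\<^sub>0 nat) set)"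
    by (rule card_image) (auto simp: inj_on_def tmon_eq_iff)
qed

lemma poly_eq_if_eventually_eq:
  fixes p q :: "real poly"
  assumes "\<forall>\<^sub>F d in sequentially. poly p (real d) = poly q (real d)"
  shows "p = q"
proof (rule ccontr)
  assume "p \<noteq> q"
  obtain D where D: "\<And>d. d \<ge> D \<Longrightarrow> poly p (real d) = poly q (real d)"
    using assms by (auto simp: eventually_at_top_linorder)
  have "real ` {D..} \<subseteq> {x. poly (p - q) x = 0}" using D by auto
  moreover have "finite {x. poly (p - q) x = 0}"
    using \<open>p \<noteq> q\<close> by (intro poly_roots_finite) simp
  ultimately have "finite (real ` {D..})" by (rule finite_subset)
  then show False
    using finite_imageD[of real "{D..}"] infinite_Ici[of D] by (auto simp: inj_on_def)
qed

lemma degree_quot_eq_eventual_hilbert_fun: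
  assumes "\<forall>\<^sub>F d in sequentially. hilbert_fun I d = N" and "N > 0"
  shows "degree_quot I = real N"
proof -
  have "is_hilbert_poly I [:real N:]"
    using assms(1) unfolding is_hilbert_poly_def by eventually_elim simp
  moreover have "p = [:real N:]" if "is_hilbert_poly I p" for p
  proof (rule poly_eq_if_eventually_eq)
    show "\<forall>\<^sub>F d in sequentially. poly p (real d) = poly [:real N:] (real d)"
      using that assms(1) unfolding is_hilbert_poly_def by eventually_elim simp
  qed
  ultimately have "(THE p. is_hilbert_poly I p) = [:real N:]" by (rule the_equality)
  then show ?thesis using assms(2) by (simp add: degree_quot_def)
qed

definition exp_vec :: "('n::finite \<Rightarrow>\<^sub>0 nat) \<Rightarrow> int^'n" where
  "exp_vec u = (\<chi> i. int (Poly_Mapping.lookup u i))"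

lemma exp_vec_add: "exp_vec (u + v) = exp_vec u + exp_vec v"
  by (simp add: exp_vec_def vec_eq_iff lookup_add)

lemma sum_exp_vec: "(\<Sum>j\<in>UNIV. exp_vec u $ j) = int (mdeg u)"
  by (simp add: exp_vec_def mdeg_def)

lemma lookup_pos_part: "Poly_Mapping.lookup (pos_part a) = (\<lambda>i. nat (a $ i))"
  unfolding pos_part_def by (rule lookup_Abs_poly_mapping) simp

lemma lookup_neg_part: "Poly_Mapping.lookup (neg_part a) = (\<lambda>i. nat (- (a $ i)))"
  unfolding neg_part_def by (rule lookup_Abs_poly_mapping) simp

lemma exp_vec_pos_part_minus_neg_part: "exp_vec (pos_part a) - exp_vec (neg_part a) = a"
  by (simp add: exp_vec_def vec_eq_iff lookup_pos_part lookup_neg_part)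

lemma binomial_in_lattice_ideal:
  assumes "exp_vec u - exp_vec v \<in> L"
  shows "tmon u - tmon v \<in> (lattice_ideal L :: ('n::finite, 'k::comm_ring_1) mpoly set)"
proof -
  define a where "a = exp_vec u - exp_vec v"
  \<comment> \<open>\<open>t\<^sup>u - t\<^sup>v = t\<^sup>w (t\<^sup>a\<^sup>+ - t\<^sup>a\<^sup>-)\<close> with \<open>w = min u v\<close>.\<close>
  define w where "w = Abs_poly_mapping (\<lambda>i. min (Poly_Mapping.lookup u i) (Poly_Mapping.lookup v i))"
  have lookup_w: "Poly_Mapping.lookup w = (\<lambda>i. min (Poly_Mapping.lookup u i) (Poly_Mapping.lookup v i))"
    unfolding w_def by (rule lookup_Abs_poly_mapping) simp
  have "u = w + pos_part a" "v = w + neg_part a"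
    by (rule poly_mapping_eqI,
        simp add: lookup_add lookup_w lookup_pos_part lookup_neg_part a_def exp_vec_def)+
  then have "tmon u - tmon v = tmon w * (tmon (pos_part a) - tmon (neg_part a) :: ('n, 'k) mpoly)"
    by (simp add: tmon_add right_diff_distrib)
  moreover have "a \<in> L" using assms by (simp add: a_def)
  ultimately show ?thesis unfolding lattice_ideal_def ideal_gen_def
    by (intro CollectI exI[of _ "{tmon (pos_part a) - tmon (neg_part a)}"] exI[of _ "\<lambda>_. tmon w"])
      auto
qed

section \<open>The lattice and its fundamental parallelepiped\<close>

lemma real_vec_add: "real_vec (a + b) = real_vec a + real_vec b"
  by (simp add: real_vec_def vec_eq_iff)

lemma real_vec_diff: "real_vec (a - b) = real_vec a - real_vec b"
  by (simp add: real_vec_def vec_eq_iff)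

lemma real_vec_eq_iff: "real_vec a = real_vec b \<longleftrightarrow> a = b"
  by (simp add: real_vec_def vec_eq_iff)

lemma real_vec_nth: "real_vec a $ j = real_of_int (a $ j)"
  by (simp add: real_vec_def)

definition zero_sum_vecs :: "(real^'n::finite) set" where
  "zero_sum_vecs = {x. (\<Sum>j\<in>UNIV. x $ j) = 0}"

lemma subspace_zero_sum_vecs: "subspace zero_sum_vecs"
  unfolding zero_sum_vecs_def subspace_def by (auto simp: sum.distrib simp flip: sum_distrib_left)

lemma dim_zero_sum_vecs: "dim (zero_sum_vecs :: (real^'n::finite) set) = CARD('n) - 1"
proof -
  have "zero_sum_vecs = {x :: real^'n. (\<chi> j. 1) \<bullet> x = 0}"
    by (simp add: zero_sum_vecs_def inner_vec_def)
  moreover have "(\<chi> j. (1::real)) \<noteq> (0::real^'n)" by (simp add: vec_eq_iff)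
  ultimately show ?thesis using dim_hyperplane[of "(\<chi> j. 1) :: real^'n"] by simp
qed

lemma real_vec_in_zero_sum_vecs_iff: "real_vec a \<in> zero_sum_vecs \<longleftrightarrow> (\<Sum>j\<in>UNIV. a $ j) = 0"
  by (simp add: zero_sum_vecs_def real_vec_nth flip: of_int_sum)

definition int_points :: "(real^'n::finite) set" where
  "int_points = {x. \<forall>i. x $ i \<in> \<int>}"

locale lattice_basis =
  fixes L :: "(int^'n::finite) set" and \<alpha> :: "nat \<Rightarrow> int^'n" and m :: nat
  assumes m_eq: "m = CARD('n) - 1"
    and homogeneous: "homogeneous_lattice L"
    and Z_basis: "is_Z_basis L m \<alpha>"
begin

lemma L_eq: "L = {(\<Sum>i<m. c i *s \<alpha> i) | c. True}"
  using Z_basis by (simp add: is_Z_basis_def)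

lemma int_comb_in_L: "(\<Sum>i<m. c i *s \<alpha> i) \<in> L"
  unfolding L_eq by blast

lemma L_add: "a \<in> L \<Longrightarrow> b \<in> L \<Longrightarrow> a + b \<in> L"
  unfolding L_eq by (auto simp: vector_sadd_rdistrib sum.distrib intro: exI[of _ "\<lambda>i. _ i + _ i"])

lemma L_uminus: "a \<in> L \<Longrightarrow> - a \<in> L"
  unfolding L_eq by (auto simp: vec_eq_iff sum_negf intro: exI[of _ "\<lambda>i. - _ i"])

lemma L_diff: "a \<in> L \<Longrightarrow> b \<in> L \<Longrightarrow> a - b \<in> L"
  using L_add[of a "- b"] L_uminus[of b] by simp

lemma L_zero: "0 \<in> L"
  using int_comb_in_L[of "\<lambda>_. 0"] by simp

lemma alpha_in_L: "i < m \<Longrightarrow> \<alpha> i \<in> L"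
proof -
  assume "i < m"
  have "(\<Sum>k<m. (if k = i then 1 else 0::int) *s \<alpha> k) = (\<Sum>k<m. if k = i then \<alpha> k else 0)"
    by (rule sum.cong) auto
  then show ?thesis
    using int_comb_in_L[of "\<lambda>k. if k = i then 1 else 0"] \<open>i < m\<close> by (simp add: sum.delta')
qed

lemma L_sum_zero: "a \<in> L \<Longrightarrow> (\<Sum>j\<in>UNIV. a $ j) = 0"
  using homogeneous by (simp add: homogeneous_lattice_def)

definition lin_comb :: "(nat \<Rightarrow> real) \<Rightarrow> real^'n" where
  "lin_comb c = (\<Sum>i<m. c i *\<^sub>R real_vec (\<alpha> i))"

lemma lin_comb_nth: "lin_comb c $ j = (\<Sum>i<m. c i * real_of_int (\<alpha> i $ j))"
  by (simp add: lin_comb_def real_vec_def)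

lemma lin_comb_add: "lin_comb (\<lambda>i. c i + d i) = lin_comb c + lin_comb d"
  by (simp add: lin_comb_def scaleR_add_left sum.distrib)

lemma lin_comb_diff: "lin_comb (\<lambda>i. c i - d i) = lin_comb c - lin_comb d"
  by (simp add: lin_comb_def scaleR_diff_left sum_subtractf)

lemma lin_comb_scale: "lin_comb (\<lambda>i. a * c i) = a *\<^sub>R lin_comb c"
  by (simp add: lin_comb_def scaleR_sum_right)

lemma lin_comb_cong: "(\<And>i. i < m \<Longrightarrow> c i = d i) \<Longrightarrow> lin_comb c = lin_comb d"
  by (simp add: lin_comb_def)

lemma lin_comb_zero [simp]: "lin_comb (\<lambda>_. 0) = 0"
  by (simp add: lin_comb_def)

lemma lin_comb_unit: "i < m \<Longrightarrow> lin_comb (\<lambda>k. if k = i then 1 else 0) = real_vec (\<alpha> i)"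
proof -
  assume "i < m"
  have "lin_comb (\<lambda>k. if k = i then 1 else 0) = (\<Sum>k<m. if k = i then real_vec (\<alpha> k) else 0)"
    unfolding lin_comb_def by (rule sum.cong) auto
  then show ?thesis using \<open>i < m\<close> by (simp add: sum.delta')
qed

lemma real_vec_int_comb: "real_vec (\<Sum>i<m. c i *s \<alpha> i) = lin_comb (\<lambda>i. real_of_int (c i))"
  by (simp add: real_vec_def lin_comb_def vec_eq_iff)

lemma lin_comb_eq_0_imp: "lin_comb c = 0 \<Longrightarrow> i < m \<Longrightarrow> c i = 0"
proof (rule ccontr)
  assume 0: "lin_comb c = 0" "i < m" "c i \<noteq> 0"
  then have "\<forall>j\<in>UNIV. (\<Sum>i\<in>{..<m}. c i * real_of_int (\<alpha> i $ j)) = 0"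
    by (metis lin_comb_nth zero_index)
  then obtain d where d: "\<forall>j\<in>UNIV. (\<Sum>i\<in>{..<m}. d i * (\<alpha> i $ j)) = 0" "\<exists>i\<in>{..<m}. d i \<noteq> 0"
    using int_dependent_if_real_dependent[of "UNIV::'n set" "{..<m}" c "\<lambda>i j. \<alpha> i $ j"] 0 by auto
  have "(\<Sum>i<m. d i *s \<alpha> i) = 0" using d(1) by (simp add: vec_eq_iff)
  then show False using Z_basis d(2) by (auto simp: is_Z_basis_def)
qed

lemma lin_comb_inj: "lin_comb c = lin_comb d \<Longrightarrow> i < m \<Longrightarrow> c i = d i"
  using lin_comb_eq_0_imp[of "\<lambda>i. c i - d i" i] by (simp add: lin_comb_diff)

lemma alpha_zero_sum: "i < m \<Longrightarrow> real_vec (\<alpha> i) \<in> zero_sum_vecs"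
  using L_sum_zero[OF alpha_in_L] by (simp add: real_vec_in_zero_sum_vecs_iff)

lemma lin_comb_zero_sum: "lin_comb c \<in> zero_sum_vecs"
  unfolding lin_comb_def
  by (intro subspace_sum[OF subspace_zero_sum_vecs] subspace_mul[OF subspace_zero_sum_vecs] alpha_zero_sum)
    simp

abbreviation basis_vecs :: "(real^'n) set" where
  "basis_vecs \<equiv> (\<lambda>i. real_vec (\<alpha> i)) ` {..<m}"

lemma inj_on_basis_vecs: "inj_on (\<lambda>i. real_vec (\<alpha> i)) {..<m}"
proof (rule inj_onI, rule ccontr)
  fix i j assume ij: "i \<in> {..<m}" "j \<in> {..<m}" "real_vec (\<alpha> i) = real_vec (\<alpha> j)" "i \<noteq> j"
  define c where "c k = (if k = i then 1 else 0) - (if k = j then 1 else 0::real)" for k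
  have "lin_comb c = 0"
    using ij unfolding c_def by (simp add: lin_comb_diff lin_comb_unit)
  then show False using lin_comb_eq_0_imp[of c i] ij by (simp add: c_def)
qed

lemma sum_basis_vecs: "(\<Sum>v\<in>basis_vecs. u v *\<^sub>R v) = lin_comb (\<lambda>i. u (real_vec (\<alpha> i)))"
  unfolding lin_comb_def by (simp add: sum.reindex[OF inj_on_basis_vecs])

lemma independent_basis_vecs: "independent basis_vecs"
  unfolding independent_explicit
  by (auto simp: sum_basis_vecs dest: lin_comb_eq_0_imp)

lemma dim_basis_vecs: "dim basis_vecs = m"
  using dim_eq_card_independent[OF independent_basis_vecs] inj_on_basis_vecs by (simp add: card_image)

lemma span_basis_vecs: "span basis_vecs = zero_sum_vecs"
proof (rule subspace_dim_equal)
  show "span basis_vecs \<subseteq> zero_sum_vecs"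
    by (rule span_minimal) (use alpha_zero_sum subspace_zero_sum_vecs in auto)
  show "dim (zero_sum_vecs :: (real^'n) set) \<le> dim (span basis_vecs)"
    using dim_basis_vecs dim_zero_sum_vecs[where 'n='n] m_eq by simp
qed (simp_all add: subspace_zero_sum_vecs)

lemma zero_sum_vecs_lin_comb: "y \<in> zero_sum_vecs \<Longrightarrow> \<exists>c. y = lin_comb c"
  unfolding span_basis_vecs[symmetric] span_finite[OF finite_imageI[OF finite_lessThan]]
  by (auto simp: sum_basis_vecs)

definition coeff_bound :: int where
  "coeff_bound = (\<Sum>j\<in>UNIV. \<Sum>i<m. \<bar>\<alpha> i $ j\<bar>)"

lemma lin_comb_bound:
  assumes "\<forall>i<m. 0 \<le> c i \<and> c i < 1"
  shows "\<bar>lin_comb c $ j\<bar> \<le> real_of_int coeff_bound"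
proof -
  have "\<bar>lin_comb c $ j\<bar> \<le> (\<Sum>i<m. \<bar>c i * real_of_int (\<alpha> i $ j)\<bar>)"
    unfolding lin_comb_nth by (rule sum_abs)
  also have "\<dots> \<le> (\<Sum>i<m. real_of_int \<bar>\<alpha> i $ j\<bar>)"
    by (rule sum_mono) (use assms in \<open>auto simp: abs_mult intro!: mult_left_le_one_le\<close>)
  also have "\<dots> \<le> real_of_int coeff_bound"
  proof -
    have "(\<Sum>i<m. \<bar>\<alpha> i $ j\<bar>) \<le> coeff_bound"
      unfolding coeff_bound_def by (rule member_le_sum) (auto intro: sum_nonneg)
    then show ?thesis by (simp flip: of_int_sum of_int_abs)
  qed
  finally show ?thesis .
qed

definition fund_points :: "(int^'n) set" where
  "fund_points = {x. \<exists>c. real_vec x = lin_comb c \<and> (\<forall>i<m. 0 \<le> c i \<and> c i < 1)}"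

lemma finite_fund_points: "finite fund_points"
proof (rule finite_subset[OF _ finite_bounded_int_vecs], clarify)
  fix x j assume "x \<in> fund_points"
  then obtain c where "real_vec x = lin_comb c" "\<forall>i<m. 0 \<le> c i \<and> c i < 1"
    by (auto simp: fund_points_def)
  then have "real_of_int \<bar>x $ j\<bar> \<le> real_of_int coeff_bound"
    using lin_comb_bound by (metis of_int_abs real_vec_nth)
  then show "\<bar>x $ j\<bar> \<le> coeff_bound" by linarith
qed

lemma zero_in_fund_points: "0 \<in> fund_points"
  by (auto simp: fund_points_def real_vec_def vec_eq_iff intro!: exI[of _ "\<lambda>_. 0"])

lemma fund_points_zero_sum: "r \<in> fund_points \<Longrightarrow> (\<Sum>j\<in>UNIV. r $ j) = 0"
  using lin_comb_zero_sum by (auto simp: fund_points_def simp flip: real_vec_in_zero_sum_vecs_iff)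

lemma fund_points_eq_if_congruent:
  assumes r: "r \<in> fund_points" and r': "r' \<in> fund_points" and "r - r' \<in> L"
  shows "r = r'"
proof -
  obtain c where c: "real_vec r = lin_comb c" "\<forall>i<m. 0 \<le> c i \<and> c i < 1"
    using r by (auto simp: fund_points_def)
  obtain c' where c': "real_vec r' = lin_comb c'" "\<forall>i<m. 0 \<le> c' i \<and> c' i < 1"
    using r' by (auto simp: fund_points_def)
  obtain n where n: "r - r' = (\<Sum>i<m. n i *s \<alpha> i)" using \<open>r - r' \<in> L\<close> by (auto simp: L_eq)
  have "lin_comb (\<lambda>i. c i - c' i) = lin_comb (\<lambda>i. real_of_int (n i))"
    using arg_cong[OF n, of real_vec] by (simp add: real_vec_diff real_vec_int_comb c(1) c'(1) lin_comb_diff)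
  then have diff: "i < m \<Longrightarrow> c i - c' i = real_of_int (n i)" for i by (rule lin_comb_inj)
  have "n i = 0" if "i < m" for i
  proof -
    have "- 1 < real_of_int (n i)" "real_of_int (n i) < 1"
      using diff[OF that] c(2) c'(2) that by force+
    then show "n i = 0" by linarith
  qed
  then show ?thesis using n by (simp add: vec_eq_iff)
qed

definition coords :: "int^'n \<Rightarrow> nat \<Rightarrow> real" where
  "coords x = (SOME c. real_vec x = lin_comb c)"

definition fund_rep :: "int^'n \<Rightarrow> int^'n" where
  "fund_rep x = x - (\<Sum>i<m. \<lfloor>coords x i\<rfloor> *s \<alpha> i)"

lemma fund_rep_in_fund_points:
  assumes "(\<Sum>j\<in>UNIV. x $ j) = 0"
  shows "fund_rep x \<in> fund_points"
proof -
  have "real_vec x = lin_comb (coords x)"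
    using zero_sum_vecs_lin_comb assms unfolding coords_def
    by (metis (mono_tags) real_vec_in_zero_sum_vecs_iff someI_ex)
  then have "real_vec (fund_rep x) = lin_comb (\<lambda>i. frac (coords x i))"
    by (simp add: fund_rep_def frac_def real_vec_diff real_vec_int_comb lin_comb_diff)
  then show ?thesis
    unfolding fund_points_def by (auto intro!: exI[of _ "\<lambda>i. frac (coords x i)"] simp: frac_lt_1)
qed

lemma fund_rep_congruent: "x - fund_rep x \<in> L"
  unfolding fund_rep_def by (simp add: int_comb_in_L)

section \<open>Relative volume of the basis simplex\<close>

definition dilated_simplex :: "real \<Rightarrow> (real^'n) set" where
  "dilated_simplex t = {lin_comb c | c. (\<forall>i<m. 0 \<le> c i) \<and> (\<Sum>i<m. c i) \<le> t}"

lemma convex_dilated_simplex: "convex (dilated_simplex t)"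
  unfolding convex_def dilated_simplex_def
proof clarify
  fix c d :: "nat \<Rightarrow> real" and u v :: real
  assume c: "\<forall>i<m. 0 \<le> c i" "(\<Sum>i<m. c i) \<le> t" and d: "\<forall>i<m. 0 \<le> d i" "(\<Sum>i<m. d i) \<le> t"
    and uv: "0 \<le> u" "0 \<le> v" "u + v = 1"
  have "u *\<^sub>R lin_comb c + v *\<^sub>R lin_comb d = lin_comb (\<lambda>i. u * c i + v * d i)"
    by (simp add: lin_comb_add lin_comb_scale)
  moreover have "\<forall>i<m. 0 \<le> u * c i + v * d i" using c d uv by simp
  moreover have "(\<Sum>i<m. u * c i + v * d i) \<le> t"
  proof -
    have "(\<Sum>i<m. u * c i + v * d i) = u * (\<Sum>i<m. c i) + v * (\<Sum>i<m. d i)"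
      by (simp add: sum.distrib sum_distrib_left)
    also have "\<dots> \<le> u * t + v * t" using c d uv by (intro add_mono mult_left_mono) auto
    also have "\<dots> = t" using uv by (metis distrib_right mult_1)
    finally show ?thesis .
  qed
  ultimately show "\<exists>e. u *\<^sub>R lin_comb c + v *\<^sub>R lin_comb d = lin_comb e
      \<and> (\<forall>i<m. 0 \<le> e i) \<and> (\<Sum>i<m. e i) \<le> t"
    by blast
qed

lemma convex_hull_basis_simplex: "convex hull (insert 0 basis_vecs) = dilated_simplex 1"
proof
  show "convex hull (insert 0 basis_vecs) \<subseteq> dilated_simplex 1"
  proof (rule hull_minimal[where S=convex, OF _ convex_dilated_simplex], clarify)
    fix x assume "x \<in> insert 0 basis_vecs"
    then consider "x = 0" | i where "i < m" "x = real_vec (\<alpha> i)" by auto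
    then show "x \<in> dilated_simplex 1"
    proof cases
      case 1
      then show ?thesis unfolding dilated_simplex_def by (force intro!: exI[of _ "\<lambda>_. 0"])
    next
      case 2
      moreover have "(\<Sum>k<m. if k = i then 1 else 0::real) = 1" using 2 by (simp add: sum.delta')
      ultimately show ?thesis unfolding dilated_simplex_def using lin_comb_unit[of i]
        by (intro CollectI exI[of _ "\<lambda>k. if k = i then 1 else 0"]) auto
    qed
  qed
  show "dilated_simplex 1 \<subseteq> convex hull (insert 0 basis_vecs)"
  proof
    fix x assume "x \<in> dilated_simplex 1"
    then obtain c where c: "x = lin_comb c" "\<forall>i<m. 0 \<le> c i" "(\<Sum>i<m. c i) \<le> 1"
      unfolding dilated_simplex_def by auto
    \<comment> \<open>The vertex \<open>0\<close> is given the remaining weight \<open>1 - \<Sum>c\<^sub>i\<close>.\<close>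
    define a where "a i = (if i < m then c i else 1 - (\<Sum>i<m. c i))" for i
    define y where "y i = (if i < m then real_vec (\<alpha> i) else 0)" for i
    have "(\<Sum>j\<in>{..<Suc m}. a j *\<^sub>R y j) \<in> convex hull (insert 0 basis_vecs)"
    proof (rule convex_sum)
      show "(\<Sum>i\<in>{..<Suc m}. a i) = 1" by (simp add: a_def)
      show "\<And>i. i \<in> {..<Suc m} \<Longrightarrow> 0 \<le> a i" using c by (auto simp: a_def)
      show "\<And>i. i \<in> {..<Suc m} \<Longrightarrow> y i \<in> convex hull insert 0 basis_vecs"
        by (auto simp: y_def intro: hull_inc)
    qed auto
    moreover have "(\<Sum>j\<in>{..<Suc m}. a j *\<^sub>R y j) = x"
      by (simp add: c(1) lin_comb_def a_def y_def)
    ultimately show "x \<in> convex hull (insert 0 basis_vecs)" by simp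
  qed
qed

lemma aff_dim_basis_simplex: "aff_dim (convex hull (insert 0 basis_vecs)) = int m"
proof -
  have "aff_dim (convex hull (insert 0 basis_vecs)) = int (dim ((+) (- 0) ` insert 0 basis_vecs))"
    by (simp only: aff_dim_convex_hull aff_dim_eq_dim hull_inc insertI1)
  also have "\<dots> = int (dim basis_vecs)" by (simp add: dim_insert span_zero)
  finally show ?thesis by (simp add: dim_basis_vecs)
qed

lemma scaleR_dilated_simplex:
  assumes "k > 0"
  shows "(\<lambda>x. k *\<^sub>R x) ` dilated_simplex 1 = dilated_simplex k"
proof
  show "(*\<^sub>R) k ` dilated_simplex 1 \<subseteq> dilated_simplex k"
  proof clarify
    fix x assume "x \<in> dilated_simplex 1"
    then obtain c where c: "x = lin_comb c" "\<forall>i<m. 0 \<le> c i" "(\<Sum>i<m. c i) \<le> 1"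
      unfolding dilated_simplex_def by auto
    have "k *\<^sub>R x = lin_comb (\<lambda>i. k * c i)" using c by (simp add: lin_comb_scale)
    moreover have "\<forall>i<m. 0 \<le> k * c i" using c assms by simp
    moreover have "(\<Sum>i<m. k * c i) \<le> k" using c assms by (simp flip: sum_distrib_left)
    ultimately show "k *\<^sub>R x \<in> dilated_simplex k" unfolding dilated_simplex_def by blast
  qed
  show "dilated_simplex k \<subseteq> (*\<^sub>R) k ` dilated_simplex 1"
  proof
    fix x assume "x \<in> dilated_simplex k"
    then obtain c where c: "x = lin_comb c" "\<forall>i<m. 0 \<le> c i" "(\<Sum>i<m. c i) \<le> k"
      unfolding dilated_simplex_def by auto
    have "(\<Sum>i<m. c i / k) \<le> 1" using c assms by (simp flip: sum_divide_distrib)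
    then have "lin_comb (\<lambda>i. c i / k) \<in> dilated_simplex 1"
      unfolding dilated_simplex_def using c assms by auto
    moreover have "x = k *\<^sub>R lin_comb (\<lambda>i. c i / k)"
      using c assms by (simp flip: lin_comb_scale)
    ultimately show "x \<in> (*\<^sub>R) k ` dilated_simplex 1" by blast
  qed
qed

definition fund_shift :: "(int^'n) \<times> (nat \<Rightarrow> nat) \<Rightarrow> real^'n" where
  "fund_shift rn = real_vec (fst rn) + lin_comb (\<lambda>i. real (snd rn i))"

lemma lin_comb_nat_in_int_points: "lin_comb (\<lambda>i. real (n i)) \<in> int_points"
  by (auto simp: int_points_def lin_comb_nth intro!: Ints_sum Ints_mult)

lemma dilated_simplex_int_points_subset:
  "dilated_simplex (real k) \<inter> int_points \<subseteq> fund_shift ` (fund_points \<times> bounded_compositions m k)"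
proof
  fix x assume x: "x \<in> dilated_simplex (real k) \<inter> int_points"
  then obtain c where c: "x = lin_comb c" "\<forall>i<m. 0 \<le> c i" "(\<Sum>i<m. c i) \<le> real k"
    by (auto simp: dilated_simplex_def)
  define n where "n i = (if i < m then nat \<lfloor>c i\<rfloor> else 0)" for i
  have n_floor: "i < m \<Longrightarrow> real (n i) = of_int \<lfloor>c i\<rfloor>" for i using c(2) by (simp add: n_def)
  define y where "y = x - lin_comb (\<lambda>i. real (n i))"
  have "y \<in> int_points"
    using x lin_comb_nat_in_int_points[of n] by (auto simp: y_def int_points_def)
  define r where "r = (\<chi> j. \<lfloor>y $ j\<rfloor>)"
  have r: "real_vec r = y"
    using \<open>y \<in> int_points\<close> by (auto simp: r_def real_vec_def int_points_def vec_eq_iff)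
  have "y = lin_comb (\<lambda>i. frac (c i))"
    by (simp add: y_def c(1) frac_def lin_comb_diff[symmetric] n_floor cong: lin_comb_cong)
  then have "r \<in> fund_points"
    using r by (auto simp: fund_points_def frac_lt_1 intro!: exI[of _ "\<lambda>i. frac (c i)"])
  moreover have "n \<in> bounded_compositions m k"
  proof -
    have "real (\<Sum>i<m. n i) \<le> (\<Sum>i<m. c i)"
      unfolding of_nat_sum by (rule sum_mono) (simp add: n_floor)
    then have "(\<Sum>i<m. n i) \<le> k" using c(3) by linarith
    then show ?thesis by (auto simp: bounded_compositions_def n_def)
  qed
  moreover have "fund_shift (r, n) = x" by (simp add: fund_shift_def r y_def)
  ultimately show "x \<in> fund_shift ` (fund_points \<times> bounded_compositions m k)" by force
qed

lemma fund_shift_image_subset: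
  assumes "k \<ge> m"
  shows "fund_shift ` (fund_points \<times> bounded_compositions m (k - m)) \<subseteq> dilated_simplex (real k) \<inter> int_points"
proof clarify
  fix r n assume r: "r \<in> fund_points" and n: "n \<in> bounded_compositions m (k - m)"
  obtain c where c: "real_vec r = lin_comb c" "\<forall>i<m. 0 \<le> c i \<and> c i < 1"
    using r by (auto simp: fund_points_def)
  have "fund_shift (r, n) = lin_comb (\<lambda>i. c i + real (n i))"
    by (simp add: fund_shift_def c(1) lin_comb_add)
  moreover have "(\<Sum>i<m. c i + real (n i)) \<le> real k"
  proof -
    have "(\<Sum>i<m. c i) \<le> (\<Sum>i<(m::nat). 1)" by (rule sum_mono) (use c(2) in auto)
    moreover have "(\<Sum>i<m. n i) \<le> k - m" using n by (simp add: bounded_compositions_def)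
    then have "(\<Sum>i<m. real (n i)) \<le> real k - real m"
      using assms by (simp flip: of_nat_sum of_nat_diff)
    ultimately show ?thesis by (simp add: sum.distrib)
  qed
  moreover have "\<forall>i<m. 0 \<le> c i + real (n i)" using c(2) by (simp add: add_nonneg_nonneg)
  ultimately have "fund_shift (r, n) \<in> dilated_simplex (real k)"
    unfolding dilated_simplex_def by blast
  moreover have "fund_shift (r, n) \<in> int_points"
    using lin_comb_nat_in_int_points[of n] by (auto simp: fund_shift_def int_points_def real_vec_nth)
  ultimately show "fund_shift (r, n) \<in> dilated_simplex (real k) \<inter> int_points" by simp
qed

lemma inj_on_fund_shift: "inj_on fund_shift (fund_points \<times> bounded_compositions m K)"
proof (rule inj_onI, clarify)
  fix r n r' n'
  assume r: "r \<in> fund_points" and n: "n \<in> bounded_compositions m K"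
    and r': "r' \<in> fund_points" and n': "n' \<in> bounded_compositions m K"
    and eq: "fund_shift (r, n) = fund_shift (r', n')"
  obtain c where c: "real_vec r = lin_comb c" "\<forall>i<m. 0 \<le> c i \<and> c i < 1"
    using r by (auto simp: fund_points_def)
  obtain c' where c': "real_vec r' = lin_comb c'" "\<forall>i<m. 0 \<le> c' i \<and> c' i < 1"
    using r' by (auto simp: fund_points_def)
  have "lin_comb (\<lambda>i. c i + real (n i)) = lin_comb (\<lambda>i. c' i + real (n' i))"
    using eq by (simp add: fund_shift_def c(1) c'(1) lin_comb_add)
  then have coeff_eq: "i < m \<Longrightarrow> c i + real (n i) = c' i + real (n' i)" for i
    by (rule lin_comb_inj)
  \<comment> \<open>Compare integer parts and fractional parts of the coefficients.\<close>
  have n_eq: "i < m \<Longrightarrow> n i = n' i" for i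
    using coeff_eq[of i] c(2) c'(2) floor_eq_iff[of "c i + real (n i)" "int (n i)"]
      floor_eq_iff[of "c' i + real (n' i)" "int (n' i)"] by auto
  then have "n = n'"
    using n n' by (auto simp: bounded_compositions_def intro!: ext) (metis not_le)
  moreover have "lin_comb c = lin_comb c'"
    using coeff_eq n_eq by (intro lin_comb_cong) simp
  then have "r = r'" using c(1) c'(1) real_vec_eq_iff by metis
  ultimately show "r = r' \<and> n = n'" by simp
qed

lemma card_dilated_simplex_int_points_bounds:
  "card (dilated_simplex (real k) \<inter> int_points) \<le> card fund_points * ((k + m) choose m)"
  "k \<ge> m \<Longrightarrow> card fund_points * (k choose m) \<le> card (dilated_simplex (real k) \<inter> int_points)"
proof -
  have fin: "finite (fund_points \<times> bounded_compositions m K)" for K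
    by (simp add: finite_fund_points finite_bounded_compositions)
  have "card (dilated_simplex (real k) \<inter> int_points)
      \<le> card (fund_shift ` (fund_points \<times> bounded_compositions m k))"
    by (rule card_mono[OF _ dilated_simplex_int_points_subset]) (simp add: fin)
  also have "\<dots> \<le> card fund_points * ((k + m) choose m)"
    using card_image_le[OF fin] by (simp add: card_cartesian_product card_bounded_compositions)
  finally show "card (dilated_simplex (real k) \<inter> int_points) \<le> card fund_points * ((k + m) choose m)" .
  assume "k \<ge> m"
  have "card fund_points * (k choose m) = card (fund_shift ` (fund_points \<times> bounded_compositions m (k - m)))"
    using \<open>k \<ge> m\<close> card_image[OF inj_on_fund_shift]
    by (simp add: card_cartesian_product card_bounded_compositions)
  also have "\<dots> \<le> card (dilated_simplex (real k) \<inter> int_points)"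
    by (rule card_mono[OF finite_subset[OF dilated_simplex_int_points_subset] fund_shift_image_subset])
      (simp_all add: fin \<open>k \<ge> m\<close>)
  finally show "card fund_points * (k choose m) \<le> card (dilated_simplex (real k) \<inter> int_points)" .
qed

lemma rel_volume_basis_simplex:
  "rel_volume (convex hull (insert 0 basis_vecs)) = real (card fund_points) / fact m"
proof -
  let ?f = "\<lambda>k. card (dilated_simplex (real k) \<inter> int_points)"
  have "(\<lambda>k. real (?f k) / real k ^ m) \<longlonglongrightarrow> real (card fund_points) / fact m"
    by (rule tendsto_binomial_sandwich) (use card_dilated_simplex_int_points_bounds in auto)
  moreover have "\<forall>\<^sub>F k in sequentially. real (?f k) / real k ^ m
      = real (card ((\<lambda>x. real k *\<^sub>R x) ` (convex hull (insert 0 basis_vecs)) \<inter> {x. \<forall>i. x $ i \<in> \<int>}))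
        / real k ^ nat (aff_dim (convex hull (insert 0 basis_vecs)))"
    using eventually_ge_at_top[of "1::nat"]
    by eventually_elim
      (simp add: aff_dim_basis_simplex, simp add: convex_hull_basis_simplex scaleR_dilated_simplex int_points_def)
  ultimately show ?thesis
    unfolding rel_volume_def by (blast intro: limI Lim_transform_eventually)
qed

section \<open>Hilbert function of the lattice ideal\<close>

definition class_coeff_sum :: "('n \<Rightarrow>\<^sub>0 nat) \<Rightarrow> ('n, 'k::field) mpoly \<Rightarrow> 'k" where
  "class_coeff_sum w p =
    (\<Sum>u\<in>Poly_Mapping.keys p. if exp_vec u - exp_vec w \<in> L then Poly_Mapping.lookup p u else 0)"

lemma class_coeff_sum_superset:
  assumes "finite W" "Poly_Mapping.keys p \<subseteq> W"
  shows "class_coeff_sum w p = (\<Sum>u\<in>W. if exp_vec u - exp_vec w \<in> L then Poly_Mapping.lookup p u else 0)"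
  unfolding class_coeff_sum_def by (rule sum.mono_neutral_left) (use assms in \<open>auto simp: in_keys_iff\<close>)

lemma class_coeff_sum_add: "class_coeff_sum w (p + q) = class_coeff_sum w p + class_coeff_sum w q"
proof -
  define W where "W = Poly_Mapping.keys p \<union> Poly_Mapping.keys q"
  have W: "finite W" "Poly_Mapping.keys p \<subseteq> W" "Poly_Mapping.keys q \<subseteq> W" "Poly_Mapping.keys (p + q) \<subseteq> W"
    using keys_add[of p q] by (auto simp: W_def)
  have "class_coeff_sum w (p + q) = (\<Sum>u\<in>W. (if exp_vec u - exp_vec w \<in> L then Poly_Mapping.lookup p u else 0)
      + (if exp_vec u - exp_vec w \<in> L then Poly_Mapping.lookup q u else 0))"
    unfolding class_coeff_sum_superset[OF W(1,4)] by (rule sum.cong) (auto simp: lookup_add)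
  then show ?thesis by (simp add: sum.distrib class_coeff_sum_superset[OF W(1)] W)
qed

lemma class_coeff_sum_diff: "class_coeff_sum w (p - q) = class_coeff_sum w p - class_coeff_sum w q"
proof -
  have "class_coeff_sum w (- q) = - class_coeff_sum w q"
    by (simp add: class_coeff_sum_def sum_negf[symmetric] if_distrib cong: if_cong)
  then show ?thesis using class_coeff_sum_add[of w p "- q"] by simp
qed

lemma class_coeff_sum_sum:
  "finite A \<Longrightarrow> class_coeff_sum w (sum f A) = (\<Sum>a\<in>A. class_coeff_sum w (f a))"
  by (induction A rule: finite_induct) (simp_all add: class_coeff_sum_def[of _ 0] class_coeff_sum_add)

lemma class_coeff_sum_single:
  "class_coeff_sum w (Poly_Mapping.single v c) = (if exp_vec v - exp_vec w \<in> L then c else 0)"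
  by (simp add: class_coeff_sum_superset[of "{v}"])

lemma class_coeff_sum_kscale: "class_coeff_sum w (kscale c p) = c * class_coeff_sum w p"
proof -
  have "Poly_Mapping.keys (kscale c p) \<subseteq> Poly_Mapping.keys p"
    by (auto simp: in_keys_iff lookup_kscale)
  then show ?thesis
    by (simp add: class_coeff_sum_superset[of "Poly_Mapping.keys p"] lookup_kscale sum_distrib_left
        if_distrib cong: if_cong)
qed

lemma class_coeff_sum_mult_binomial:
  assumes "a \<in> L"
  shows "class_coeff_sum w (q * (tmon (pos_part a) - tmon (neg_part a))) = 0"
proof -
  have "exp_vec (u + pos_part a) - exp_vec w = (exp_vec (u + neg_part a) - exp_vec w) + a" for u
    using exp_vec_pos_part_minus_neg_part[of a] by (simp add: exp_vec_add algebra_simps)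
  then have "exp_vec (u + pos_part a) - exp_vec w \<in> L \<longleftrightarrow> exp_vec (u + neg_part a) - exp_vec w \<in> L" for u
    using L_add[OF _ assms] L_diff[OF _ assms] by (metis add_diff_cancel_right')
  then show ?thesis
    by (simp add: right_diff_distrib class_coeff_sum_diff mult_tmon class_coeff_sum_sum
        class_coeff_sum_single)
qed

lemma class_coeff_sum_lattice_ideal:
  assumes "p \<in> lattice_ideal L"
  shows "class_coeff_sum w (p :: ('n, 'k::field) mpoly) = 0"
proof -
  obtain G q where G: "finite G" "G \<subseteq> {tmon (pos_part a) - tmon (neg_part a) | a. a \<in> L}"
    and p: "p = (\<Sum>g\<in>G. q g * g)"
    using assms unfolding lattice_ideal_def ideal_gen_def by auto
  have "class_coeff_sum w (q g * g) = 0" if "g \<in> G" for g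
    using that G(2) class_coeff_sum_mult_binomial by auto
  then show ?thesis using G(1) by (simp add: p class_coeff_sum_sum)
qed

definition class_rep :: "nat \<Rightarrow> ('n \<Rightarrow>\<^sub>0 nat) \<Rightarrow> ('n \<Rightarrow>\<^sub>0 nat)" where
  "class_rep d u = (SOME v. v \<in> deg_monomials d \<and> exp_vec v - exp_vec u \<in> L)"

lemma class_rep:
  "u \<in> deg_monomials d \<Longrightarrow> class_rep d u \<in> deg_monomials d \<and> exp_vec (class_rep d u) - exp_vec u \<in> L"
  unfolding class_rep_def by (rule someI[of _ u]) (simp add: L_zero)

lemma class_rep_eq_iff:
  assumes "u \<in> deg_monomials d" "u' \<in> deg_monomials d"
  shows "class_rep d u = class_rep d u' \<longleftrightarrow> exp_vec u - exp_vec u' \<in> L"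
proof
  assume "class_rep d u = class_rep d u'"
  then have "exp_vec u - exp_vec u'
      = (exp_vec (class_rep d u') - exp_vec u') - (exp_vec (class_rep d u) - exp_vec u)"
    by simp
  then show "exp_vec u - exp_vec u' \<in> L" using class_rep[OF assms(1)] class_rep[OF assms(2)] L_diff by metis
next
  assume "exp_vec u - exp_vec u' \<in> L"
  then have "v \<in> deg_monomials d \<and> exp_vec v - exp_vec u \<in> L
      \<longleftrightarrow> v \<in> deg_monomials d \<and> exp_vec v - exp_vec u' \<in> L" for v
    using L_add L_diff by (metis diff_add_cancel diff_diff_eq2)
  then show "class_rep d u = class_rep d u'" unfolding class_rep_def by simp
qed

definition class_reps :: "nat \<Rightarrow> ('n \<Rightarrow>\<^sub>0 nat) set" where
  "class_reps d = class_rep d ` deg_monomials d"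

definition nonreps :: "nat \<Rightarrow> ('n \<Rightarrow>\<^sub>0 nat) set" where
  "nonreps d = deg_monomials d - class_reps d"

lemma finite_nonreps: "finite (nonreps d)"
  by (simp add: nonreps_def finite_deg_monomials)

lemma class_reps_subset: "class_reps d \<subseteq> deg_monomials d"
  using class_rep by (auto simp: class_reps_def)

lemma finite_class_reps: "finite (class_reps d)"
  using finite_subset[OF class_reps_subset finite_deg_monomials] .

lemma class_rep_class_reps: "w \<in> class_reps d \<Longrightarrow> class_rep d w = w"
  using class_rep class_rep_eq_iff by (fastforce simp: class_reps_def)

lemma class_rep_nonreps: "u \<in> nonreps d \<Longrightarrow> class_rep d u \<in> class_reps d \<and> class_rep d u \<noteq> u"
  unfolding nonreps_def class_reps_def by (metis DiffD1 DiffD2 image_eqI)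

lemma class_reps_congruent_iff:
  "u \<in> class_reps d \<Longrightarrow> w \<in> class_reps d \<Longrightarrow> exp_vec u - exp_vec w \<in> L \<longleftrightarrow> u = w"
  using class_rep_eq_iff class_rep_class_reps class_reps_subset by (metis subsetD)

definition rep_binomial :: "nat \<Rightarrow> ('n \<Rightarrow>\<^sub>0 nat) \<Rightarrow> ('n, 'k::field) mpoly" where
  "rep_binomial d u = tmon u - tmon (class_rep d u)"

lemma lookup_rep_binomial:
  "Poly_Mapping.lookup (rep_binomial d u) w = (if w = u then 1 else 0) - (if w = class_rep d u then 1 else 0)"
  by (simp add: rep_binomial_def lookup_minus lookup_tmon)

lemma rep_binomial_in_ideal_Sdeg:
  assumes "u \<in> deg_monomials d"
  shows "rep_binomial d u \<in> lattice_ideal L \<inter> Sdeg d"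
proof
  show "rep_binomial d u \<in> lattice_ideal L"
    unfolding rep_binomial_def
    by (rule binomial_in_lattice_ideal) (use L_uminus class_rep[OF assms] in fastforce)
  have "Poly_Mapping.keys (rep_binomial d u) \<subseteq> {u, class_rep d u}"
    by (auto simp: in_keys_iff lookup_rep_binomial split: if_splits)
  then show "rep_binomial d u \<in> Sdeg d"
    using assms class_rep[OF assms] by (auto simp: Sdeg_iff_keys)
qed

lemma class_coeff_sum_rep_binomial:
  "u \<in> deg_monomials d \<Longrightarrow> class_coeff_sum w (rep_binomial d u) = 0"
  using class_coeff_sum_lattice_ideal rep_binomial_in_ideal_Sdeg by blast

lemma class_coeff_sum_eq_lookup:
  assumes "Poly_Mapping.keys p \<subseteq> class_reps d" "w \<in> class_reps d"
  shows "class_coeff_sum w p = Poly_Mapping.lookup p w"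
proof -
  have "class_coeff_sum w p = (\<Sum>u\<in>class_reps d. if u = w then Poly_Mapping.lookup p u else 0)"
    using assms by (simp add: class_coeff_sum_superset[OF finite_class_reps] class_reps_congruent_iff
        cong: if_cong)
  then show ?thesis using assms(2) finite_class_reps by simp
qed

lemma lookup_sum_rep_binomials:
  assumes "w \<notin> class_reps d"
  shows "Poly_Mapping.lookup (\<Sum>u\<in>nonreps d. kscale (Poly_Mapping.lookup p u) (rep_binomial d u)) w
    = (if w \<in> nonreps d then Poly_Mapping.lookup p w else 0)"
proof -
  have "w \<noteq> class_rep d u" if "u \<in> nonreps d" for u
    using class_rep_nonreps[OF that] assms by auto
  then have "Poly_Mapping.lookup (\<Sum>u\<in>nonreps d. kscale (Poly_Mapping.lookup p u) (rep_binomial d u)) w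
      = (\<Sum>u\<in>nonreps d. if w = u then Poly_Mapping.lookup p u else 0)"
    unfolding lookup_sum by (intro sum.cong) (auto simp: lookup_kscale lookup_rep_binomial)
  then show ?thesis by (simp add: nonreps_def finite_deg_monomials)
qed

lemma ideal_Sdeg_subset_span_rep_binomials:
  "lattice_ideal L \<inter> Sdeg d \<subseteq> kspace.span (rep_binomial d ` nonreps d :: ('n, 'k::field) mpoly set)"
proof
  fix p :: "('n, 'k) mpoly" assume p: "p \<in> lattice_ideal L \<inter> Sdeg d"
  define q where "q = (\<Sum>u\<in>nonreps d. kscale (Poly_Mapping.lookup p u) (rep_binomial d u :: ('n, 'k) mpoly))"
  \<comment> \<open>\<open>p - q\<close> is supported on the representatives and is killed by every class functional.\<close>
  have keys: "Poly_Mapping.keys (p - q) \<subseteq> class_reps d"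
  proof
    fix w assume w: "w \<in> Poly_Mapping.keys (p - q)"
    show "w \<in> class_reps d"
    proof (rule ccontr)
      assume nonrep: "w \<notin> class_reps d"
      have "Poly_Mapping.lookup q w = (if w \<in> nonreps d then Poly_Mapping.lookup p w else 0)"
        unfolding q_def by (rule lookup_sum_rep_binomials[OF nonrep])
      moreover have "w \<notin> nonreps d \<Longrightarrow> Poly_Mapping.lookup p w = 0"
        using p nonrep by (auto simp: nonreps_def Sdeg_iff_keys in_keys_iff)
      ultimately have "Poly_Mapping.lookup q w = Poly_Mapping.lookup p w" by simp
      then show False using w by (simp add: in_keys_iff lookup_minus)
    qed
  qed
  have "class_coeff_sum w q = 0" for w
    unfolding q_def class_coeff_sum_sum[OF finite_nonreps]
    by (rule sum.neutral) (auto simp: class_coeff_sum_kscale class_coeff_sum_rep_binomial nonreps_def)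
  then have "class_coeff_sum w (p - q) = 0" for w
    using p class_coeff_sum_lattice_ideal[of p w] by (simp add: class_coeff_sum_diff)
  then have "p - q = 0"
    using keys class_coeff_sum_eq_lookup[OF keys] by (intro poly_mapping_eqI) (auto simp: in_keys_iff)
  then have "p = q" by simp
  also have "q \<in> kspace.span (rep_binomial d ` nonreps d)"
    unfolding q_def by (intro kspace.span_sum kspace.span_scale kspace.span_base) auto
  finally show "p \<in> kspace.span (rep_binomial d ` nonreps d)" .
qed

lemma kdim_ideal_Sdeg:
  "kdim (lattice_ideal L \<inter> Sdeg d :: ('n, 'k::field) mpoly set) = card (nonreps d)"
  unfolding kdim_def
proof (rule kspace.dim_unique[of "rep_binomial d ` nonreps d"])
  show "(rep_binomial d ` nonreps d :: ('n, 'k) mpoly set) \<subseteq> lattice_ideal L \<inter> Sdeg d"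
    using rep_binomial_in_ideal_Sdeg by (auto simp: nonreps_def)
  show "(lattice_ideal L \<inter> Sdeg d :: ('n, 'k) mpoly set) \<subseteq> kspace.span (rep_binomial d ` nonreps d)"
    by (rule ideal_Sdeg_subset_span_rep_binomials)
  have lookup_rep_binomial_nonreps: "Poly_Mapping.lookup (rep_binomial d u' :: ('n, 'k) mpoly) u = (if u' = u then 1 else 0)"
    if "u \<in> nonreps d" "u' \<in> nonreps d" for u u'
    using class_rep_nonreps[OF that(1)] class_rep_nonreps[OF that(2)] that(1)
    by (auto simp: lookup_rep_binomial nonreps_def)
  then have inj: "inj_on (rep_binomial d :: _ \<Rightarrow> ('n, 'k) mpoly) (nonreps d)"
    by (intro inj_onI) (metis one_neq_zero)
  show "kspace.independent (rep_binomial d ` nonreps d :: ('n, 'k) mpoly set)"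
  proof (rule kspace_independent_if_private_monomials)
    fix b :: "('n, 'k) mpoly" assume "b \<in> rep_binomial d ` nonreps d"
    then obtain u where u: "u \<in> nonreps d" "b = rep_binomial d u" by blast
    show "\<exists>w. Poly_Mapping.lookup b w = 1 \<and>
        (\<forall>b'\<in>rep_binomial d ` nonreps d. b' \<noteq> b \<longrightarrow> Poly_Mapping.lookup b' w = 0)"
      using u lookup_rep_binomial_nonreps by (intro exI[of _ u]) auto
  qed (simp add: finite_nonreps)
  show "card (rep_binomial d ` nonreps d :: ('n, 'k) mpoly set) = card (nonreps d)"
    by (rule card_image[OF inj])
qed

lemma hilbert_fun_eq_card_class_reps:
  "hilbert_fun (lattice_ideal L :: ('n, 'k::field) mpoly set) d = card (class_reps d)"
proof -
  have "card (nonreps d) = card (deg_monomials d :: ('n \<Rightarrow>\<^sub>0 nat) set) - card (class_reps d)"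
    unfolding nonreps_def by (rule card_Diff_subset[OF finite_class_reps class_reps_subset])
  moreover have "card (class_reps d) \<le> card (deg_monomials d :: ('n \<Rightarrow>\<^sub>0 nat) set)"
    by (rule card_mono[OF finite_deg_monomials class_reps_subset])
  ultimately show ?thesis unfolding hilbert_fun_def by (simp add: kdim_Sdeg kdim_ideal_Sdeg)
qed

text \<open>Subtracting \<open>d e\<^sub>0\<close> moves degree-\<open>d\<close> exponents into the zero-sum hyperplane; the index
  \<open>undefined\<close> serves as an arbitrary fixed coordinate.\<close>

definition unit0 :: "int^'n" where
  "unit0 = (\<chi> j. if j = undefined then 1 else 0)"

lemma sum_unit0: "(\<Sum>j\<in>UNIV. unit0 $ j) = 1"
  by (simp add: unit0_def)

definition fund_class :: "nat \<Rightarrow> ('n \<Rightarrow>\<^sub>0 nat) \<Rightarrow> int^'n" where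
  "fund_class d u = fund_rep (exp_vec u - int d *s unit0)"

lemma fund_class_in_fund_points: "u \<in> deg_monomials d \<Longrightarrow> fund_class d u \<in> fund_points"
  unfolding fund_class_def
  by (rule fund_rep_in_fund_points)
    (simp add: sum_subtractf sum_exp_vec sum_unit0 deg_monomials_def flip: sum_distrib_left)

lemma fund_class_eq_iff:
  assumes u: "u \<in> deg_monomials d" and v: "v \<in> deg_monomials d"
  shows "fund_class d u = fund_class d v \<longleftrightarrow> exp_vec u - exp_vec v \<in> L"
proof -
  define x y where "x = exp_vec u - int d *s unit0" and "y = exp_vec v - int d *s unit0"
  have "exp_vec u - exp_vec v = (x - fund_rep x) - (y - fund_rep y) + (fund_rep x - fund_rep y)"
    by (simp add: x_def y_def)
  then have "exp_vec u - exp_vec v \<in> L \<longleftrightarrow> fund_rep x - fund_rep y \<in> L"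
    using fund_rep_congruent L_add L_diff by (metis add_diff_cancel_left')
  moreover have "fund_rep x - fund_rep y \<in> L \<longleftrightarrow> fund_rep x = fund_rep y"
    using fund_points_eq_if_congruent fund_class_in_fund_points[OF u] fund_class_in_fund_points[OF v]
      L_zero by (auto simp: fund_class_def x_def y_def)
  ultimately show ?thesis by (simp add: fund_class_def x_def y_def)
qed

lemma card_class_reps: "card (class_reps d) = card (fund_class d ` deg_monomials d)"
proof -
  have "fund_class d ` class_reps d = fund_class d ` deg_monomials d"
    unfolding class_reps_def image_image
    by (intro image_cong refl) (use class_rep fund_class_eq_iff in blast)
  moreover have "inj_on (fund_class d) (class_reps d)"
    using fund_class_eq_iff class_reps_congruent_iff class_reps_subset by (intro inj_onI) blast
  ultimately show ?thesis by (metis card_image)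
qed

lemma exists_nonneg_congruent:
  assumes r: "r \<in> fund_points" and d: "real d \<ge> real CARD('n) * real_of_int coeff_bound"
  shows "\<exists>l\<in>L. \<forall>j. 0 \<le> (r + int d *s unit0 + l) $ j"
proof -
  define s where "s = real CARD('n)"
  have "s > 0" by (simp add: s_def)
  \<comment> \<open>Centre \<open>r + d e\<^sub>0\<close> by the constant vector \<open>d/s\<close>, then reduce the coefficients into \<open>[0, 1)\<close>:
    the result stays within \<open>coeff_bound\<close> of the constant vector \<open>d/s\<close>.\<close>
  define y where "y = real_vec (r + int d *s unit0) - (real d / s) *\<^sub>R (\<chi> j. 1)"
  have "(\<Sum>j\<in>UNIV. (r + int d *s unit0) $ j) = int d"
    using fund_points_zero_sum[OF r] by (simp add: sum.distrib sum_unit0 flip: sum_distrib_left)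
  then have "(\<Sum>j\<in>UNIV. real_vec (r + int d *s unit0) $ j) = real d"
    unfolding real_vec_nth of_int_sum[symmetric] by simp
  then have "(\<Sum>j\<in>UNIV. y $ j) = real d - real d / s * s"
    by (simp add: y_def sum_subtractf s_def)
  also have "\<dots> = 0" using \<open>s > 0\<close> by simp
  finally obtain c where c: "y = lin_comb c"
    using zero_sum_vecs_lin_comb by (auto simp: zero_sum_vecs_def)
  define l where "l = - (\<Sum>i<m. \<lfloor>c i\<rfloor> *s \<alpha> i)"
  have "real_vec (r + int d *s unit0 + l)
      = y + (real d / s) *\<^sub>R (\<chi> j. 1) - lin_comb (\<lambda>i. real_of_int \<lfloor>c i\<rfloor>)"
    by (simp add: l_def y_def real_vec_add real_vec_diff real_vec_int_comb)
  also have "\<dots> = lin_comb (\<lambda>i. frac (c i)) + (real d / s) *\<^sub>R (\<chi> j. 1)"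
    by (simp add: c frac_def lin_comb_diff)
  finally have shifted: "real_vec (r + int d *s unit0 + l) = lin_comb (\<lambda>i. frac (c i)) + (real d / s) *\<^sub>R (\<chi> j. 1)" .
  have "real_of_int ((r + int d *s unit0 + l) $ j) = lin_comb (\<lambda>i. frac (c i)) $ j + real d / s" for j
    using arg_cong[OF shifted, of "\<lambda>v. v $ j"] by (simp add: real_vec_nth)
  moreover have "\<bar>lin_comb (\<lambda>i. frac (c i)) $ j\<bar> \<le> real d / s" for j
  proof -
    have "\<bar>lin_comb (\<lambda>i. frac (c i)) $ j\<bar> \<le> real_of_int coeff_bound"
      by (intro lin_comb_bound) (simp add: frac_lt_1)
    also have "\<dots> \<le> real d / s" using d \<open>s > 0\<close> by (simp add: s_def field_simps)
    finally show ?thesis .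
  qed
  ultimately have "\<forall>j. 0 \<le> (r + int d *s unit0 + l) $ j"
    by (metis abs_le_iff add.commute diff_ge_0_iff_ge diff_minus_eq_add of_int_0_le_iff)
  moreover have "l \<in> L" unfolding l_def by (rule L_uminus[OF int_comb_in_L])
  ultimately show ?thesis by blast
qed

lemma fund_points_subset_fund_class_image:
  assumes d: "real d \<ge> real CARD('n) * real_of_int coeff_bound"
  shows "fund_points \<subseteq> fund_class d ` deg_monomials d"
proof
  fix r assume r: "r \<in> fund_points"
  obtain l where l: "l \<in> L" and nonneg: "\<forall>j. 0 \<le> (r + int d *s unit0 + l) $ j"
    using exists_nonneg_congruent[OF r d] by blast
  define u where "u = Abs_poly_mapping (\<lambda>j. nat ((r + int d *s unit0 + l) $ j))"
  have "Poly_Mapping.lookup u = (\<lambda>j. nat ((r + int d *s unit0 + l) $ j))"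
    unfolding u_def by (rule lookup_Abs_poly_mapping) simp
  then have exp_u: "exp_vec u = r + int d *s unit0 + l"
    using nonneg by (simp add: exp_vec_def vec_eq_iff)
  have "int (mdeg u) = int d"
    using fund_points_zero_sum[OF r] L_sum_zero[OF l]
    by (simp add: exp_u sum.distrib sum_unit0 flip: sum_exp_vec sum_distrib_left)
  then have "u \<in> deg_monomials d" by (simp add: deg_monomials_def)
  moreover have "fund_class d u = r"
  proof (rule fund_points_eq_if_congruent)
    show "fund_class d u \<in> fund_points" by (rule fund_class_in_fund_points[OF \<open>u \<in> deg_monomials d\<close>])
    have "fund_class d u - r = (fund_rep (r + l) - (r + l)) + l"
      by (simp add: fund_class_def exp_u)
    then show "fund_class d u - r \<in> L"
      using fund_rep_congruent[of "r + l"] L_uminus L_add l by (metis minus_diff_eq)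
  qed (rule r)
  ultimately show "r \<in> fund_class d ` deg_monomials d" by blast
qed

lemma hilbert_fun_eventually_eq_card_fund_points:
  "\<forall>\<^sub>F d in sequentially. hilbert_fun (lattice_ideal L :: ('n, 'k::field) mpoly set) d = card fund_points"
proof -
  obtain D :: nat where D: "real D \<ge> real CARD('n) * real_of_int coeff_bound"
    using real_arch_simple by blast
  have "\<forall>\<^sub>F d in sequentially. real d \<ge> real CARD('n) * real_of_int coeff_bound"
    by (rule eventually_mono[OF eventually_ge_at_top[of D]]) (use D in linarith)
  then show ?thesis
  proof eventually_elim
    case (elim d)
    then have "fund_class d ` deg_monomials d = fund_points"
      using fund_class_in_fund_points fund_points_subset_fund_class_image by blast
    then show ?case by (simp add: hilbert_fun_eq_card_class_reps card_class_reps)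
  qed
qed

end

theorem corollary3p18:
  fixes L :: "(int^'n::finite) set"
    and \<alpha> :: "nat \<Rightarrow> int^'n"
  assumes "CARD('n) \<ge> 2"
    and "homogeneous_lattice L"
    and "is_Z_basis L (CARD('n) - 1) \<alpha>"
  shows "degree_quot (lattice_ideal L :: ('n, 'k::field) mpoly set)
       = fact (CARD('n) - 1) * rel_volume (convex hull (insert 0 (real_vec ` \<alpha> ` {..<CARD('n) - 1})))"
proof -
  interpret lattice_basis L \<alpha> "CARD('n) - 1"
    by unfold_locales (use assms in auto)
  have "degree_quot (lattice_ideal L :: ('n, 'k) mpoly set) = real (card fund_points)"
    using hilbert_fun_eventually_eq_card_fund_points finite_fund_points zero_in_fund_points
    by (intro degree_quot_eq_eventual_hilbert_fun) (auto simp: card_gt_0_iff)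
  then show ?thesis
    using rel_volume_basis_simplex by (simp add: image_image)
qed

end
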